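(* Let $A$ be any randomized algorithm which, on input a continuous proper scoring rule $s$ with convex exposure on an $n$-outcome forecast domain $\mathcal{D}$ and expert forecasts $\mathbf{p}_1,\dots,\mathbf{p}_m\in\mathcal{D}$, outputs a weight vector $\mathbf{w}\in\Delta^m$. Fix any such input and let $\hat{\mathbf{w}}=\mathbb{E}_A[\mathbf{w}]$. Then for every $j\in[n]$, \[s(\mathbf{p}^*_{\hat{\mathbf{w}}};j)\ge\mathbb{E}_A\big[s(\mathbf{p}^*_{\mathbf{w}};j)\big],\] where for $\mathbf{x}\in\Delta^m$, $\mathbf{p}^*_{\mathbf{x}}$ denotes the quasi-arithmetic pool of $\mathbf{p}_1,\dots,\mathbf{p}_m$ with weight vector $\mathbf{x}$ with respect to the exposure function of $s$.
   Context: $\Delta^k$ is the standard simplex in $\mathbb{R}^k$. An $n$-outcome forecast domain is a convex $(n-1)$-dimensional subset of $\Delta^n$. A proper scoring rule on $\mathcal{D}$ is $s:\mathcal{D}\times[n]\to\mathbb{R}$ with $\sum_j p(j)s(\mathbf{p};j)\ge\sum_j p(j)s(\mathbf{x};j)$ for all $\mathbf{p},\mathbf{x}\in\mathcal{D}$, equality only if $\mathbf{x}=\mathbf{p}$. $G(\mathbf{p}):=\sum_j p(j)s(\mathbf{p};j)$ is differentiable and strictly convex; the exposure function is $\mathbf{g}=\nabla G$ (values modulo translation by the all-ones vector). Convex exposure: range of $\mathbf{g}$ is convex. The QA pool with weights $\mathbf{x}$ is the unique $\mathbf{p}^*_{\mathbf{x}}\in\mathcal{D}$ with $\mathbf{g}(\mathbf{p}^*_{\mathbf{x}})=\sum_i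 x_i\mathbf{g}(\mathbf{p}_i)$ (modulo the all-ones vector). *)

theory Defs
  imports "HOL-Analysis.Analysis" "HOL-Probability.Probability"
begin

text \<open>Outcomes are indexed by a finite type 'n (so n = CARD('n)); experts by a finite type 'm.\<close>

definition prob_simplex :: "(real^'k) set" where
  "prob_simplex = {x. (\<forall>i. 0 \<le> x $ i) \<and> (\<Sum>i\<in>UNIV. x $ i) = 1}"

definition ones_vec :: "real^'k" where
  "ones_vec = (\<chi> i. 1)"

definition forecast_domain :: "(real^'n) set \<Rightarrow> bool" where
  "forecast_domain D \<longleftrightarrow> D \<subseteq> prob_simplex \<and> convex D \<and> aff_dim D = int CARD('n) - 1"

definition expected_score :: "(real^'n \<Rightarrow> 'n \<Rightarrow> real) \<Rightarrow> real^'n \<Rightarrow> real^'n \<Rightarrow> real" where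
  "expected_score s p x = (\<Sum>j\<in>UNIV. p $ j * s x j)"

definition proper_scoring_rule :: "(real^'n) set \<Rightarrow> (real^'n \<Rightarrow> 'n \<Rightarrow> real) \<Rightarrow> bool" where
  "proper_scoring_rule D s \<longleftrightarrow>
     (\<forall>p\<in>D. \<forall>x\<in>D. expected_score s p p \<ge> expected_score s p x
        \<and> (expected_score s p p = expected_score s p x \<longrightarrow> x = p))"

definition score_G :: "(real^'n \<Rightarrow> 'n \<Rightarrow> real) \<Rightarrow> real^'n \<Rightarrow> real" where
  "score_G s p = expected_score s p p"

definition strictly_convex_on :: "'a::real_vector set \<Rightarrow> ('a \<Rightarrow> real) \<Rightarrow> bool" where
  "strictly_convex_on S f \<longleftrightarrow>
     (\<forall>x\<in>S. \<forall>y\<in>S. \<forall>t::real. x \<noteq> y \<and> 0 < t \<and> t < 1 \<longrightarrow>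
        f ((1 - t) *\<^sub>R x + t *\<^sub>R y) < (1 - t) * f x + t * f y)"

text \<open>g is an exposure function of s on D: G is differentiable (relative to D) and strictly convex,
  and g(p) is its gradient at p. Since D lies in the hyperplane sum = 1, g is determined only
  modulo translation by the all-ones_vec vector.\<close>
definition is_exposure :: "(real^'n) set \<Rightarrow> (real^'n \<Rightarrow> 'n \<Rightarrow> real) \<Rightarrow> (real^'n \<Rightarrow> real^'n) \<Rightarrow> bool" where
  "is_exposure D s g \<longleftrightarrow>
     strictly_convex_on D (score_G s) \<and>
     (\<forall>p\<in>D. (score_G s has_derivative (\<lambda>h. g p \<bullet> h)) (at p within D))"

definition convex_exposure :: "(real^'n) set \<Rightarrow> (real^'n \<Rightarrow> real^'n) \<Rightarrow> bool" where
  "convex_exposure D g \<longleftrightarrow> convex {g p + c *\<^sub>R ones_vec | p c. p \<in> D}"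

definition qa_pool :: "(real^'n) set \<Rightarrow> (real^'n \<Rightarrow> real^'n) \<Rightarrow> ('m::finite \<Rightarrow> real^'n) \<Rightarrow> real^'m \<Rightarrow> real^'n" where
  "qa_pool D g P x = (THE q. q \<in> D \<and> (\<exists>c. g q = (\<Sum>i\<in>UNIV. x $ i *\<^sub>R g (P i)) + c *\<^sub>R ones_vec))"

end

theory Submission
  imports Defs
begin

(* Properness makes the score vector S(p) = (s(p;k))_k a subgradient of G at p. Differentiability
   of G and continuity of s then force S(p) = g(p) + c 1, because the directions of D span the
   hyperplane orthogonal to 1. At the pool q = p*(x) we have g(q) = y + c 1 with
   y = sum_i x_i g(p_i), so s(q;j) = y_j - G*(y), where G*(y), the supremum of y . p - G(p) over
   p in D, is attained at q. As y is linear in x and G* is convex, the pooled score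
   x |-> s(p*(x);j) is concave, with a supergradient read off from q; Jensen's inequality along
   this supergradient gives the claim. *)

lemma convex_segment_point_mem:
  fixes x u :: "'a::real_vector"
  assumes "convex D" "x \<in> D" "u \<in> D" "0 \<le> t" "t \<le> 1"
  shows "x + t *\<^sub>R (u - x) \<in> D"
  using convexD_alt[OF assms] by (simp add: algebra_simps)

lemma strictly_convex_on_imp_convex_on:
  assumes "strictly_convex_on D f" "convex D"
  shows "convex_on D f"
proof (rule convex_onI)
  fix t :: real and x y assume t: "0 < t" "t < 1" and xy: "x \<in> D" "y \<in> D"
  show "f ((1 - t) *\<^sub>R x + t *\<^sub>R y) \<le> (1 - t) * f x + t * f y"
  proof (cases "x = y")
    case True then show ?thesis by (simp add: algebra_simps flip: scaleR_add_left)
  next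
    case False then show ?thesis using assms t xy unfolding strictly_convex_on_def by (simp add: less_imp_le)
  qed
qed (use assms in simp)

lemma tendsto_segment_difference_quotient:
  fixes f :: "'a::real_normed_vector \<Rightarrow> real"
  assumes "convex D" "x \<in> D" "u \<in> D" and f': "(f has_derivative f') (at x within D)"
  shows "((\<lambda>t. (f (x + t *\<^sub>R (u - x)) - f x) / t) \<longlongrightarrow> f' (u - x)) (at_right 0)"
proof -
  let ?c = "\<lambda>t::real. x + t *\<^sub>R (u - x)"
  have "?c ` {0..1} \<subseteq> D"
    using convex_segment_point_mem[OF assms(1-3)] by auto
  moreover have "(?c has_derivative (\<lambda>t. t *\<^sub>R (u - x))) (at 0 within {0..1})"
    by (auto intro!: derivative_eq_intros)
  ultimately have "((\<lambda>t. f (?c t)) has_derivative (\<lambda>t. f' (t *\<^sub>R (u - x)))) (at 0 within {0..1})"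
    using has_derivative_in_compose[of ?c _ 0 "{0..1}" f f'] has_derivative_subset[OF f'] by simp
  moreover have "f' (t *\<^sub>R (u - x)) = f' (u - x) * t" for t
    using has_derivative_bounded_linear[OF f'] by (simp add: linear_scale linear_simps)
  ultimately have "((\<lambda>t. f (?c t)) has_field_derivative f' (u - x)) (at 0 within {0..1})"
    by (simp add: has_field_derivative_def)
  then have "((\<lambda>t. (f (?c t) - f (?c 0)) / (t - 0)) \<longlongrightarrow> f' (u - x)) (at 0 within {0..1})"
    unfolding has_field_derivative_iff .
  then show ?thesis using at_within_Icc_at_right[of "0::real" 1] by simp
qed

lemma convex_on_above_tangent_within:
  fixes f :: "'a::real_normed_vector \<Rightarrow> real"
  assumes f: "convex_on D f" and D: "convex D" "x \<in> D" "u \<in> D"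
    and f': "(f has_derivative f') (at x within D)"
  shows "f x + f' (u - x) \<le> f u"
proof -
  have "eventually (\<lambda>t. (f (x + t *\<^sub>R (u - x)) - f x) / t \<le> f u - f x) (at_right 0)"
  proof (rule eventually_mono[OF eventually_at_right_real[OF zero_less_one]])
    fix t :: real assume t: "t \<in> {0<..<1}"
    have "f ((1 - t) *\<^sub>R x + t *\<^sub>R u) \<le> (1 - t) * f x + t * f u"
      using f t D by (intro convex_onD) auto
    then have "f (x + t *\<^sub>R (u - x)) - f x \<le> t * (f u - f x)"
      by (simp add: algebra_simps)
    then show "(f (x + t *\<^sub>R (u - x)) - f x) / t \<le> f u - f x"
      using t by (simp add: divide_le_eq mult.commute)
  qed
  then have "f' (u - x) \<le> f u - f x"
    by (rule tendsto_upperbound[OF tendsto_segment_difference_quotient[OF D f']]) simp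
  then show ?thesis by simp
qed

lemma convex_on_derivative_monotone:
  fixes f :: "'a::real_normed_vector \<Rightarrow> real"
  assumes f: "convex_on D f" and D: "convex D" "x \<in> D" "z \<in> D"
    and fx: "(f has_derivative fx') (at x within D)" and fz: "(f has_derivative fz') (at z within D)"
  shows "fx' (z - x) \<le> fz' (z - x)"
proof -
  have "f x + fx' (z - x) \<le> f z" by (rule convex_on_above_tangent_within[OF f D fx])
  moreover have "f z + fz' (x - z) \<le> f x" by (rule convex_on_above_tangent_within[OF f D(1,3,2) fz])
  moreover have "fz' (x - z) = - fz' (z - x)"
    using has_derivative_bounded_linear[OF fz] by (metis linear_simps(4) minus_diff_eq)
  ultimately show ?thesis by simp
qed

lemma subgradient_le_derivative:
  fixes f :: "'a::real_inner \<Rightarrow> real"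
  assumes D: "convex D" "x \<in> D" "u \<in> D" and f': "(f has_derivative f') (at x within D)"
    and subgradient: "\<forall>z\<in>D. f x + v \<bullet> (z - x) \<le> f z"
  shows "v \<bullet> (u - x) \<le> f' (u - x)"
proof -
  have "eventually (\<lambda>t. v \<bullet> (u - x) \<le> (f (x + t *\<^sub>R (u - x)) - f x) / t) (at_right 0)"
  proof (rule eventually_mono[OF eventually_at_right_real[OF zero_less_one]])
    fix t :: real assume t: "t \<in> {0<..<1}"
    then have "f x + v \<bullet> (t *\<^sub>R (u - x)) \<le> f (x + t *\<^sub>R (u - x))"
      using subgradient convex_segment_point_mem[OF D, of t] by fastforce
    then show "v \<bullet> (u - x) \<le> (f (x + t *\<^sub>R (u - x)) - f x) / t"
      using t by (simp add: le_divide_eq mult.commute)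
  qed
  then show ?thesis
    by (rule tendsto_lowerbound[OF tendsto_segment_difference_quotient[OF D f']]) simp
qed

definition conjugate_on :: "'a::real_inner set \<Rightarrow> ('a \<Rightarrow> real) \<Rightarrow> 'a \<Rightarrow> real" where
  "conjugate_on D f y = (SUP q\<in>D. y \<bullet> q - f q)"

lemma conjugate_on_bdd_above:
  fixes f :: "'a::real_inner \<Rightarrow> real"
  assumes "bounded D" "bdd_below (f ` D)"
  shows "bdd_above ((\<lambda>q. y \<bullet> q - f q) ` D)"
proof -
  obtain B where B: "\<forall>q\<in>D. norm q \<le> B" using assms(1) by (auto simp: bounded_iff)
  obtain m where m: "\<forall>q\<in>D. m \<le> f q" using assms(2) by (auto simp: bdd_below_def)
  have "y \<bullet> q - f q \<le> norm y * B - m" if "q \<in> D" for q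
  proof -
    have "y \<bullet> q \<le> norm y * norm q" by (rule norm_cauchy_schwarz)
    also have "\<dots> \<le> norm y * B" using B that by (simp add: mult_left_mono)
    finally show ?thesis using m that by fastforce
  qed
  then show ?thesis by (intro bdd_aboveI2) auto
qed

lemma conjugate_on_upper:
  fixes f :: "'a::real_inner \<Rightarrow> real"
  assumes "bounded D" "bdd_below (f ` D)" "u \<in> D"
  shows "y \<bullet> u - f u \<le> conjugate_on D f y"
  unfolding conjugate_on_def by (rule cSUP_upper[OF assms(3) conjugate_on_bdd_above[OF assms(1,2)]])

lemma conjugate_on_eq_maximum:
  assumes "q \<in> D" "\<forall>u\<in>D. y \<bullet> u - f u \<le> y \<bullet> q - f q"
  shows "conjugate_on D f y = y \<bullet> q - f q"
  unfolding conjugate_on_def using assms by (intro cSup_eq_maximum) auto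

lemma convex_on_conjugate_on:
  fixes f :: "'a::real_inner \<Rightarrow> real"
  assumes "bounded D" "bdd_below (f ` D)" "D \<noteq> {}"
  shows "convex_on UNIV (conjugate_on D f)"
proof (rule convex_onI)
  fix t :: real and a b :: 'a assume t: "0 < t" "t < 1"
  show "conjugate_on D f ((1 - t) *\<^sub>R a + t *\<^sub>R b) \<le> (1 - t) * conjugate_on D f a + t * conjugate_on D f b"
    unfolding conjugate_on_def[of D f "(1 - t) *\<^sub>R a + t *\<^sub>R b"]
  proof (rule cSUP_least[OF assms(3)])
    fix q assume "q \<in> D"
    then have "(1 - t) * (a \<bullet> q - f q) + t * (b \<bullet> q - f q) \<le> (1 - t) * conjugate_on D f a + t * conjugate_on D f b"
      using t conjugate_on_upper[OF assms(1,2)] by (intro add_mono mult_left_mono) auto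
    then show "((1 - t) *\<^sub>R a + t *\<^sub>R b) \<bullet> q - f q \<le> (1 - t) * conjugate_on D f a + t * conjugate_on D f b"
      by (simp add: inner_add_left algebra_simps)
  qed
qed simp

lemma continuous_on_conjugate_on:
  fixes f :: "'a::euclidean_space \<Rightarrow> real"
  assumes "bounded D" "bdd_below (f ` D)" "D \<noteq> {}"
  shows "continuous_on UNIV (conjugate_on D f)"
  by (rule convex_on_continuous[OF open_UNIV convex_on_conjugate_on[OF assms]])

lemma strictly_convex_on_maximizer_unique:
  fixes f :: "'a::real_inner \<Rightarrow> real"
  assumes f: "strictly_convex_on D f" and D: "convex D" "q1 \<in> D" "q2 \<in> D"
    and max1: "\<forall>u\<in>D. y \<bullet> u - f u \<le> y \<bullet> q1 - f q1"
    and max2: "\<forall>u\<in>D. y \<bullet> u - f u \<le> y \<bullet> q2 - f q2"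
  shows "q1 = q2"
proof (rule ccontr)
  assume "q1 \<noteq> q2"
  define m where "m = (1 - 1/2) *\<^sub>R q1 + (1/2::real) *\<^sub>R q2"
  have "m \<in> D" unfolding m_def by (rule convexD_alt[OF D]) auto
  have "f m < (1 - 1/2) * f q1 + (1/2) * f q2"
    unfolding m_def by (rule f[unfolded strictly_convex_on_def, rule_format]) (use D \<open>q1 \<noteq> q2\<close> in auto)
  moreover have "y \<bullet> m = (1 - 1/2) * (y \<bullet> q1) + (1/2) * (y \<bullet> q2)"
    unfolding m_def by (simp add: inner_add_right)
  ultimately have "y \<bullet> q1 - f q1 < y \<bullet> m - f m \<or> y \<bullet> q2 - f q2 < y \<bullet> m - f m"
    by (simp add: field_simps) linarith
  then show False using max1 max2 \<open>m \<in> D\<close> by fastforce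
qed

lemma prob_simplex_sum: "x \<in> prob_simplex \<Longrightarrow> (\<Sum>i\<in>UNIV. x $ i) = 1"
  unfolding prob_simplex_def by simp

lemma inner_ones_vec: "y \<bullet> ones_vec = (\<Sum>i\<in>UNIV. y $ i)"
  unfolding ones_vec_def inner_vec_def by simp

lemma inner_ones_vec_prob_simplex: "x \<in> prob_simplex \<Longrightarrow> x \<bullet> ones_vec = 1"
  by (simp add: inner_ones_vec prob_simplex_sum)

lemma inner_ones_vec_diff_prob_simplex:
  "p \<in> prob_simplex \<Longrightarrow> q \<in> prob_simplex \<Longrightarrow> (p - q) \<bullet> ones_vec = 0"
  by (simp add: inner_diff_left inner_ones_vec_prob_simplex)

lemma norm_le_1_prob_simplex: "x \<in> prob_simplex \<Longrightarrow> norm x \<le> 1"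
proof -
  assume x: "x \<in> prob_simplex"
  have "norm x \<le> (\<Sum>i\<in>UNIV. \<bar>x $ i\<bar>)" by (rule norm_le_l1_cart)
  also have "\<dots> = (\<Sum>i\<in>UNIV. x $ i)" using x unfolding prob_simplex_def by simp
  finally show ?thesis using x by (simp add: prob_simplex_sum)
qed

lemma compact_prob_simplex: "compact prob_simplex"
  unfolding compact_eq_bounded_closed
proof
  show "bounded prob_simplex"
    using norm_le_1_prob_simplex by (auto simp: bounded_iff)
  have "prob_simplex = {x. \<forall>i. 0 \<le> x $ i} \<inter> {x. (\<Sum>i\<in>UNIV. x $ i) = 1}"
    unfolding prob_simplex_def by auto
  moreover have "closed {x::real^'k. (\<Sum>i\<in>UNIV. x $ i) = 1}"
    by (intro closed_Collect_eq continuous_intros)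
  ultimately show "closed prob_simplex"
    using closed_positive_orthant by (metis closed_Int)
qed

lemma (in prob_space) integral_in_prob_simplex:
  assumes w: "w \<in> borel_measurable M" and simplex: "\<forall>\<omega>\<in>space M. w \<omega> \<in> prob_simplex"
  shows "integral\<^sup>L M w \<in> prob_simplex"
proof -
  have "integrable M w"
    using simplex norm_le_1_prob_simplex by (intro integrable_const_bound[of _ 1] w) auto
  then have component: "integral\<^sup>L M w $ i = expectation (\<lambda>\<omega>. w \<omega> $ i)"
    and integrable: "integrable M (\<lambda>\<omega>. w \<omega> $ i)" for i
    by (simp_all add: integral_bounded_linear[OF bounded_linear_vec_nth, symmetric]
        integrable_bounded_linear[OF bounded_linear_vec_nth])
  have "0 \<le> integral\<^sup>L M w $ i" for i
    using simplex unfolding component prob_simplex_def by (intro Bochner_Integration.integral_nonneg) auto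
  moreover have "(\<Sum>i\<in>UNIV. integral\<^sup>L M w $ i) = expectation (\<lambda>\<omega>. \<Sum>i\<in>UNIV. w \<omega> $ i)"
    unfolding component by (rule Bochner_Integration.integral_sum[OF integrable, symmetric])
  moreover have "\<dots> = expectation (\<lambda>\<omega>. 1)"
    using simplex by (intro Bochner_Integration.integral_cong) (auto simp: prob_simplex_sum)
  ultimately show ?thesis by (simp add: prob_simplex_def prob_space)
qed

lemma span_insert_ones_vec_directions:
  fixes x :: "real^'n"
  assumes sub: "D \<subseteq> prob_simplex" and dim: "aff_dim D = int CARD('n) - 1" and x: "x \<in> D"
  shows "span (insert ones_vec ((\<lambda>p. p - x) ` D)) = UNIV"
proof -
  define T where "T = (\<lambda>p. p - x) ` D"
  have "x \<in> affine hull D" using x by (simp add: hull_inc)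
  then have "int (dim T) = int CARD('n) - 1"
    using aff_dim_eq_dim_subtract[of x D] dim T_def by simp
  have "ones_vec \<notin> span T"
  proof
    assume "ones_vec \<in> span T"
    moreover have "orthogonal ones_vec t" if "t \<in> T" for t
      using that sub x inner_ones_vec_diff_prob_simplex
      unfolding T_def orthogonal_def by (auto simp: inner_commute)
    ultimately have "orthogonal ones_vec (ones_vec :: real^'n)"
      by (rule orthogonal_to_span)
    then show False by (simp add: orthogonal_def inner_vec_def ones_vec_def)
  qed
  with \<open>int (dim T) = _\<close> have "dim (insert ones_vec T) = CARD('n)"
    using dim_insert[of ones_vec T] by simp
  then show ?thesis
    using dim_eq_full[of "insert ones_vec T"] unfolding T_def by simp
qed

lemma orthogonal_directions_imp_multiple_ones_vec:
  fixes v x :: "real^'n"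
  assumes sub: "D \<subseteq> prob_simplex" and dim: "aff_dim D = int CARD('n) - 1" and x: "x \<in> D"
    and orthogonal: "\<forall>p\<in>D. (p - x) \<bullet> v = 0"
  shows "\<exists>c. v = c *\<^sub>R ones_vec"
proof -
  define c where "c = (v \<bullet> ones_vec) / CARD('n)"
  have "ones_vec \<bullet> (ones_vec :: real^'n) = real CARD('n)"
    by (simp add: inner_vec_def ones_vec_def)
  then have "orthogonal (v - c *\<^sub>R ones_vec) ones_vec"
    by (simp add: orthogonal_def c_def inner_diff_left)
  moreover have "orthogonal (v - c *\<^sub>R ones_vec) (p - x)" if "p \<in> D" for p
  proof -
    have "v \<bullet> (p - x) = 0"
      using orthogonal that by (metis inner_commute)
    moreover have "ones_vec \<bullet> (p - x) = 0"
      using sub x that by (metis inner_commute inner_ones_vec_diff_prob_simplex subsetD)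
    ultimately show ?thesis by (simp add: orthogonal_def inner_diff_left)
  qed
  ultimately have perp: "orthogonal (v - c *\<^sub>R ones_vec) y"
    if "y \<in> insert ones_vec ((\<lambda>p. p - x) ` D)" for y
    using that by blast
  have "orthogonal (v - c *\<^sub>R ones_vec) (v - c *\<^sub>R ones_vec)"
    by (rule orthogonal_to_span[of _ "insert ones_vec ((\<lambda>p. p - x) ` D)", OF _ perp])
      (simp_all add: span_insert_ones_vec_directions[OF sub dim x])
  then have "v = c *\<^sub>R ones_vec" by (simp add: orthogonal_def)
  then show ?thesis ..
qed

lemma (in prob_space) integral_le_of_supergradient:
  fixes w :: "'a \<Rightarrow> 'b::euclidean_space" and h :: "'b \<Rightarrow> real"
  assumes w: "w \<in> borel_measurable M" and S: "compact S" "\<forall>\<omega>\<in>space M. w \<omega> \<in> S"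
    and h: "continuous_on S h"
    and supergradient: "\<forall>x\<in>S. h x \<le> h (integral\<^sup>L M w) + (x - integral\<^sup>L M w) \<bullet> a"
  shows "expectation (\<lambda>\<omega>. h (w \<omega>)) \<le> h (integral\<^sup>L M w)"
proof -
  obtain B where "\<forall>x\<in>S. norm x \<le> B"
    using compact_imp_bounded[OF S(1)] by (auto simp: bounded_iff)
  then have w_int: "integrable M w"
    using S(2) by (intro integrable_const_bound[of _ B] w) auto
  have "w \<in> measurable M (restrict_space borel S)"
    using S(2) by (intro measurable_restrict_space2 w) auto
  then have "(\<lambda>\<omega>. h (w \<omega>)) \<in> borel_measurable M"
    using borel_measurable_continuous_on_restrict[OF h] by (rule measurable_compose)
  moreover obtain C where "\<forall>y\<in>h ` S. norm y \<le> C"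
    using compact_imp_bounded[OF compact_continuous_image[OF h S(1)]] by (auto simp: bounded_iff)
  ultimately have "integrable M (\<lambda>\<omega>. h (w \<omega>))"
    using S(2) by (intro integrable_const_bound[of _ C]) auto
  moreover have "integrable M (\<lambda>\<omega>. h (integral\<^sup>L M w) + (w \<omega> - integral\<^sup>L M w) \<bullet> a)"
    using w_int by (simp add: inner_diff_left)
  ultimately have "expectation (\<lambda>\<omega>. h (w \<omega>)) \<le> expectation (\<lambda>\<omega>. h (integral\<^sup>L M w) + (w \<omega> - integral\<^sup>L M w) \<bullet> a)"
    using S(2) supergradient by (intro integral_mono) auto
  also have "\<dots> = h (integral\<^sup>L M w)"
    using w_int by (simp add: inner_diff_left prob_space)
  finally show ?thesis .
qed

definition score_vec :: "(real^'n \<Rightarrow> 'n \<Rightarrow> real) \<Rightarrow> real^'n \<Rightarrow> real^'n" where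
  "score_vec s x = (\<chi> k. s x k)"

lemma expected_score_eq_inner: "expected_score s p x = p \<bullet> score_vec s x"
  unfolding expected_score_def score_vec_def inner_vec_def by simp

lemma score_G_eq_inner: "score_G s p = p \<bullet> score_vec s p"
  unfolding score_G_def by (rule expected_score_eq_inner)

locale exposure_scoring_rule =
  fixes D :: "(real^'n) set" and s :: "real^'n \<Rightarrow> 'n \<Rightarrow> real" and g :: "real^'n \<Rightarrow> real^'n"
  assumes domain: "forecast_domain D"
    and proper: "proper_scoring_rule D s"
    and continuous_score: "\<forall>k. continuous_on D (\<lambda>p. s p k)"
    and exposure: "is_exposure D s g"
begin

lemma convex_domain: "convex D"
  and domain_subset: "D \<subseteq> prob_simplex"
  and aff_dim_domain: "aff_dim D = int CARD('n) - 1"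
  using domain unfolding forecast_domain_def by auto

lemma domain_nonempty: "D \<noteq> {}"
  using aff_dim_domain by auto

lemma bounded_domain: "bounded D"
  using domain_subset norm_le_1_prob_simplex by (auto simp: bounded_iff)

lemma has_derivative_score_G: "p \<in> D \<Longrightarrow> (score_G s has_derivative (\<lambda>h. g p \<bullet> h)) (at p within D)"
  using exposure unfolding is_exposure_def by blast

lemma strictly_convex_on_score_G: "strictly_convex_on D (score_G s)"
  using exposure unfolding is_exposure_def by blast

lemma convex_on_score_G: "convex_on D (score_G s)"
  by (rule strictly_convex_on_imp_convex_on[OF strictly_convex_on_score_G convex_domain])

lemma score_vec_subgradient:
  assumes "x \<in> D" "z \<in> D"
  shows "score_G s x + score_vec s x \<bullet> (z - x) \<le> score_G s z"
proof -
  have "z \<bullet> score_vec s x \<le> score_G s z"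
    using proper assms unfolding proper_scoring_rule_def score_G_def expected_score_eq_inner by blast
  moreover have "score_vec s x \<bullet> (z - x) = z \<bullet> score_vec s x - x \<bullet> score_vec s x"
    by (metis inner_commute inner_diff_left)
  ultimately show ?thesis by (simp add: score_G_eq_inner)
qed

lemma bdd_below_score_G: "bdd_below (score_G s ` D)"
proof -
  obtain x where x: "x \<in> D" using domain_nonempty by blast
  have "- norm (score_vec s x) \<le> score_G s z" if "z \<in> D" for z
  proof -
    have "norm z \<le> 1"
      using norm_le_1_prob_simplex domain_subset that by blast
    then have "- norm (score_vec s x) \<le> - (norm z * norm (score_vec s x))"
      by (simp add: mult_left_le_one_le)
    also have "\<dots> \<le> z \<bullet> score_vec s x"
      using norm_cauchy_schwarz[of "- z" "score_vec s x"] by simp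
    also have "\<dots> \<le> score_G s z"
      using proper x that unfolding proper_scoring_rule_def score_G_def expected_score_eq_inner by blast
    finally show ?thesis .
  qed
  then show ?thesis by (intro bdd_belowI2) auto
qed

lemma score_vec_le_exposure:
  assumes "x \<in> D" "u \<in> D"
  shows "score_vec s x \<bullet> (u - x) \<le> g x \<bullet> (u - x)"
  using score_vec_subgradient assms convex_domain has_derivative_score_G
  by (intro subgradient_le_derivative[where f="score_G s"]) auto

lemma exposure_le_score_vec_on_segment:
  assumes D: "x \<in> D" "p \<in> D" and t: "0 < t" "t \<le> 1"
  shows "g x \<bullet> (p - x) \<le> score_vec s (x + t *\<^sub>R (p - x)) \<bullet> (p - x)"
proof -
  define z where "z = x + t *\<^sub>R (p - x)"
  have z: "z \<in> D" unfolding z_def using convex_segment_point_mem[OF convex_domain D] t by simp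
  have "g x \<bullet> (z - x) \<le> g z \<bullet> (z - x)"
    using convex_on_derivative_monotone[OF convex_on_score_G convex_domain D(1) z]
      has_derivative_score_G D(1) z by blast
  then have "g x \<bullet> (p - x) \<le> g z \<bullet> (p - x)"
    using t by (simp add: z_def)
  also have "\<dots> \<le> score_vec s z \<bullet> (p - x)"
  proof -
    have "score_vec s z \<bullet> (x - z) \<le> g z \<bullet> (x - z)"
      by (rule score_vec_le_exposure[OF z D(1)])
    moreover have "x - z = (- t) *\<^sub>R (p - x)" by (simp add: z_def)
    ultimately show ?thesis using t by simp
  qed
  finally show ?thesis unfolding z_def .
qed

lemma score_vec_minus_exposure_orthogonal:
  assumes D: "x \<in> D" "p \<in> D"
  shows "(p - x) \<bullet> (score_vec s x - g x) = 0"
proof -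
  have continuous: "continuous_on D (\<lambda>z. score_vec s z \<bullet> (p - x))"
    unfolding score_vec_def using continuous_score by (intro continuous_intros) auto
  have segment_tendsto: "((\<lambda>t. x + t *\<^sub>R (p - x)) \<longlongrightarrow> x) (at_right 0)"
    by (auto intro!: tendsto_eq_intros)
  have segment_in_D: "eventually (\<lambda>t. x + t *\<^sub>R (p - x) \<in> D) (at_right 0)"
    using convex_segment_point_mem[OF convex_domain D]
    by (intro eventually_mono[OF eventually_at_right_real[OF zero_less_one]]) auto
  have "((\<lambda>t. score_vec s (x + t *\<^sub>R (p - x)) \<bullet> (p - x)) \<longlongrightarrow> score_vec s x \<bullet> (p - x)) (at_right 0)"
    by (rule continuous_on_tendsto_compose[OF continuous segment_tendsto D(1) segment_in_D])
  moreover have "eventually (\<lambda>t. g x \<bullet> (p - x) \<le> score_vec s (x + t *\<^sub>R (p - x)) \<bullet> (p - x)) (at_right 0)"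
    using exposure_le_score_vec_on_segment[OF D]
    by (intro eventually_mono[OF eventually_at_right_real[OF zero_less_one]]) auto
  ultimately have "g x \<bullet> (p - x) \<le> score_vec s x \<bullet> (p - x)"
    by (rule tendsto_lowerbound) simp
  with score_vec_le_exposure[OF D] show ?thesis
    by (simp add: inner_diff_right inner_commute)
qed

lemma score_vec_eq_exposure_shift:
  assumes "x \<in> D"
  shows "\<exists>c. score_vec s x = g x + c *\<^sub>R ones_vec"
proof -
  obtain c where "score_vec s x - g x = c *\<^sub>R ones_vec"
    using orthogonal_directions_imp_multiple_ones_vec[OF domain_subset aff_dim_domain assms]
      score_vec_minus_exposure_orthogonal[OF assms] by blast
  then show ?thesis by (auto simp: algebra_simps)
qed

lemma score_eq_of_exposure:
  assumes q: "q \<in> D" and gq: "g q = y + c *\<^sub>R ones_vec"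
  shows "s q j = y $ j - (y \<bullet> q - score_G s q)"
proof -
  obtain c' where "score_vec s q = y + (c + c') *\<^sub>R ones_vec"
    using score_vec_eq_exposure_shift[OF q] gq by (auto simp: algebra_simps)
  moreover have "q \<bullet> ones_vec = 1"
    using q domain_subset inner_ones_vec_prob_simplex by blast
  ultimately have "score_vec s q $ j = y $ j + (c + c')" and "score_G s q = q \<bullet> y + (c + c')"
    by (simp_all add: score_G_eq_inner inner_add_right ones_vec_def)
  then show ?thesis by (simp add: score_vec_def inner_commute)
qed

lemma exposure_shift_imp_maximizer:
  assumes q: "q \<in> D" and gq: "g q = y + c *\<^sub>R ones_vec"
  shows "\<forall>u\<in>D. y \<bullet> u - score_G s u \<le> y \<bullet> q - score_G s q"
proof
  fix u assume u: "u \<in> D"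
  have "score_G s q + g q \<bullet> (u - q) \<le> score_G s u"
    by (rule convex_on_above_tangent_within[OF convex_on_score_G convex_domain q u has_derivative_score_G[OF q]])
  moreover have "ones_vec \<bullet> (u - q) = 0"
    using u q domain_subset inner_ones_vec_diff_prob_simplex by (auto simp: inner_commute)
  ultimately have "score_G s q + y \<bullet> (u - q) \<le> score_G s u"
    using gq by (simp add: inner_add_left)
  then show "y \<bullet> u - score_G s u \<le> y \<bullet> q - score_G s q"
    by (simp add: inner_diff_right)
qed

lemma conjugate_on_score_G_eq:
  assumes "q \<in> D" "g q = y + c *\<^sub>R ones_vec"
  shows "conjugate_on D (score_G s) y = y \<bullet> q - score_G s q"
  using assms exposure_shift_imp_maximizer by (intro conjugate_on_eq_maximum) auto

end

locale qa_pooling = exposure_scoring_rule +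
  fixes P :: "'m::finite \<Rightarrow> real^'n"
  assumes convex_exposure: "convex_exposure D g"
    and forecasts: "\<forall>i. P i \<in> D"
begin

definition pooled_exposure :: "real^'m \<Rightarrow> real^'n" where
  "pooled_exposure x = (\<Sum>i\<in>UNIV. x $ i *\<^sub>R g (P i))"

lemma pooled_exposure_inner: "pooled_exposure x \<bullet> v = x \<bullet> (\<chi> i. g (P i) \<bullet> v)"
  unfolding pooled_exposure_def inner_vec_def[of x] by (simp add: inner_sum_left)

lemma continuous_pooled_exposure: "continuous_on UNIV pooled_exposure"
  unfolding pooled_exposure_def by (intro continuous_intros)

lemma pooled_exposure_in_exposure_range:
  assumes "x \<in> prob_simplex"
  shows "\<exists>q\<in>D. \<exists>c. g q = pooled_exposure x + c *\<^sub>R ones_vec"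
proof -
  have "pooled_exposure x \<in> {g p + c *\<^sub>R ones_vec | p c. p \<in> D}"
    unfolding pooled_exposure_def
  proof (rule convex_sum)
    show "convex {g p + c *\<^sub>R ones_vec | p c. p \<in> D}"
      using convex_exposure unfolding convex_exposure_def .
    show "(\<Sum>i\<in>UNIV. x $ i) = 1" "\<And>i. 0 \<le> x $ i"
      using assms unfolding prob_simplex_def by auto
    show "g (P i) \<in> {g p + c *\<^sub>R ones_vec | p c. p \<in> D}" for i
      using forecasts by (metis (mono_tags, lifting) add.right_neutral mem_Collect_eq scale_zero_left)
  qed simp_all
  then obtain q c where "q \<in> D" "pooled_exposure x = g q + c *\<^sub>R ones_vec" by blast
  then show ?thesis by (intro bexI[of _ q] exI[of _ "- c"]) auto
qed

lemma qa_pool_spec: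
  assumes "x \<in> prob_simplex"
  shows "qa_pool D g P x \<in> D \<and> (\<exists>c. g (qa_pool D g P x) = pooled_exposure x + c *\<^sub>R ones_vec)"
proof -
  have "q1 = q2" if "q1 \<in> D" "g q1 = pooled_exposure x + c1 *\<^sub>R ones_vec"
    and "q2 \<in> D" "g q2 = pooled_exposure x + c2 *\<^sub>R ones_vec" for q1 q2 c1 c2
    using strictly_convex_on_maximizer_unique[OF strictly_convex_on_score_G convex_domain]
      exposure_shift_imp_maximizer that by blast
  then have "\<exists>!q. q \<in> D \<and> (\<exists>c. g q = pooled_exposure x + c *\<^sub>R ones_vec)"
    using pooled_exposure_in_exposure_range[OF assms] by blast
  then show ?thesis
    unfolding qa_pool_def pooled_exposure_def[symmetric] by (rule theI')
qed

lemma qa_pool_score_eq: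
  assumes "x \<in> prob_simplex"
  shows "s (qa_pool D g P x) j = pooled_exposure x $ j - conjugate_on D (score_G s) (pooled_exposure x)"
proof -
  obtain c where q: "qa_pool D g P x \<in> D"
    and gq: "g (qa_pool D g P x) = pooled_exposure x + c *\<^sub>R ones_vec"
    using qa_pool_spec[OF assms] by blast
  show ?thesis
    using score_eq_of_exposure[OF q gq] conjugate_on_score_G_eq[OF q gq] by simp
qed

lemma continuous_on_qa_pool_score: "continuous_on prob_simplex (\<lambda>x. s (qa_pool D g P x) j)"
proof -
  have "continuous_on UNIV (conjugate_on D (score_G s))"
    by (rule continuous_on_conjugate_on[OF bounded_domain bdd_below_score_G domain_nonempty])
  then have "continuous_on UNIV (\<lambda>x. conjugate_on D (score_G s) (pooled_exposure x))"
    by (rule continuous_on_compose2[OF _ continuous_pooled_exposure]) simp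
  then have "continuous_on UNIV (\<lambda>x. pooled_exposure x $ j - conjugate_on D (score_G s) (pooled_exposure x))"
    by (intro continuous_on_diff continuous_on_component continuous_pooled_exposure)
  then have "continuous_on prob_simplex
      (\<lambda>x. pooled_exposure x $ j - conjugate_on D (score_G s) (pooled_exposure x))"
    by (rule continuous_on_subset) simp
  then show ?thesis
    by (rule continuous_on_eq) (simp add: qa_pool_score_eq)
qed

lemma qa_pool_score_supergradient:
  assumes x0: "x0 \<in> prob_simplex" and x: "x \<in> prob_simplex"
  shows "s (qa_pool D g P x) j
    \<le> s (qa_pool D g P x0) j + (x - x0) \<bullet> (\<chi> i. g (P i) \<bullet> (axis j 1 - qa_pool D g P x0))"
proof -
  define q0 where "q0 = qa_pool D g P x0"
  define a where "a = (\<chi> i. g (P i) \<bullet> (axis j 1 - q0))"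
  have q0: "q0 \<in> D" using qa_pool_spec[OF x0] unfolding q0_def by blast
  have linear: "pooled_exposure y $ j - pooled_exposure y \<bullet> q0 = y \<bullet> a" for y
  proof -
    have "pooled_exposure y $ j - pooled_exposure y \<bullet> q0 = pooled_exposure y \<bullet> (axis j 1 - q0)"
      by (simp add: inner_diff_right inner_axis)
    then show ?thesis unfolding a_def by (simp add: pooled_exposure_inner)
  qed
  have "pooled_exposure x \<bullet> q0 - score_G s q0 \<le> conjugate_on D (score_G s) (pooled_exposure x)"
    by (rule conjugate_on_upper[OF bounded_domain bdd_below_score_G q0])
  then have "s (qa_pool D g P x) j \<le> x \<bullet> a + score_G s q0"
    using qa_pool_score_eq[OF x] linear[of x] by simp
  moreover obtain c where "g q0 = pooled_exposure x0 + c *\<^sub>R ones_vec"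
    using qa_pool_spec[OF x0] unfolding q0_def by blast
  then have "s q0 j = x0 \<bullet> a + score_G s q0"
    using score_eq_of_exposure[OF q0] linear[of x0] by simp
  ultimately show ?thesis
    unfolding q0_def[symmetric] a_def[symmetric] by (simp add: inner_diff_left)
qed

end

theorem corollary5p4:
  fixes D :: "(real^'n) set" and s :: "real^'n \<Rightarrow> 'n \<Rightarrow> real"
    and g :: "real^'n \<Rightarrow> real^'n" and P :: "'m::finite \<Rightarrow> real^'n"
    and M :: "'a measure" and w :: "'a \<Rightarrow> real^'m" and j :: 'n
  assumes "forecast_domain D"
    and "proper_scoring_rule D s"
    and "\<forall>k. continuous_on D (\<lambda>p. s p k)"
    and "is_exposure D s g"
    and "convex_exposure D g"
    and "\<forall>i. P i \<in> D"
    and "prob_space M"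
    and "w \<in> borel_measurable M"
    and "\<forall>\<omega>\<in>space M. w \<omega> \<in> prob_simplex"
  shows "s (qa_pool D g P (integral\<^sup>L M w)) j
           \<ge> integral\<^sup>L M (\<lambda>\<omega>. s (qa_pool D g P (w \<omega>)) j)"
proof -
  interpret prob_space M by fact
  interpret qa_pooling D s g P
    using assms(1-6) by unfold_locales
  have "integral\<^sup>L M w \<in> prob_simplex"
    using assms(8,9) by (rule integral_in_prob_simplex)
  with qa_pool_score_supergradient show ?thesis
    by (intro integral_le_of_supergradient[OF assms(8) compact_prob_simplex assms(9)]
        continuous_on_qa_pool_score) blast
qed

end
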